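(* Conditionally on any realization of $\hat{\mathcal P}$, with probability at least $1-\delta/10$ over the perturbation $\xi$, simultaneously for every $\lambda\in\Lambda$ the empirical MDP $\hat M_{r_p+\lambda c}$ satisfies the $\iota$-gap condition with $\iota=\frac{\omega\delta(1-\gamma)}{30|\Lambda|SA^2}$.
   Context: Finite state set ($S$ states), finite action set ($A$ actions), discount $\gamma\in[0,1)$, empirical kernel $\hat{\mathcal P}$, reward $r$ and constraint reward $c$. $r_p=r+\xi$ where $\xi(s,a)\sim\mathrm{Uniform}[0,\omega]$ are i.i.d. and independent of $\hat{\mathcal P}$. $\Lambda=\{0,\varepsilon_l,2\varepsilon_l,\dots,U\}$ is a finite grid. $\hat M_g$ is the MDP with kernel $\hat{\mathcal P}$ and reward $g$, with optimal value and action-value functions $\hat V^*_g,\hat Q^*_g$ and optimal policy $\hat\pi^*_g$. $\iota$-gap condition: for every state $s$, $\hat V^*_g(s)-\max_{a\ne\hat\pi^*_g(s)}\hat Q^*_g(s,a)\ge\iota$, where $\hat\pi^*_g(s)=\arg\max_a\hat Q^*_g(s,a)$. *)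

theory Defs
  imports "HOL-Probability.Probability"
begin

text \<open>Finite MDP with state type 's and action type 'a (both finite).
  A kernel P s a s' is the transition probability; g s a is the reward.\<close>

definition stochastic_kernel :: "('s::finite \<Rightarrow> 'a::finite \<Rightarrow> 's \<Rightarrow> real) \<Rightarrow> bool" where
  "stochastic_kernel P \<longleftrightarrow> (\<forall>s a s'. 0 \<le> P s a s') \<and> (\<forall>s a. (\<Sum>s'\<in>UNIV. P s a s') = 1)"

definition bellman_opt ::
  "('s::finite \<Rightarrow> 'a::finite \<Rightarrow> 's \<Rightarrow> real) \<Rightarrow> real \<Rightarrow> ('s \<Rightarrow> 'a \<Rightarrow> real) \<Rightarrow> ('s \<Rightarrow> real) \<Rightarrow> 's \<Rightarrow> real" where
  "bellman_opt P \<gamma> g V s = Max (range (\<lambda>a. g s a + \<gamma> * (\<Sum>s'\<in>UNIV. P s a s' * V s')))"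

text \<open>Optimal value function: the (unique, for 0 <= gamma < 1) fixed point of the
  Bellman optimality operator.\<close>
definition opt_V ::
  "('s::finite \<Rightarrow> 'a::finite \<Rightarrow> 's \<Rightarrow> real) \<Rightarrow> real \<Rightarrow> ('s \<Rightarrow> 'a \<Rightarrow> real) \<Rightarrow> 's \<Rightarrow> real" where
  "opt_V P \<gamma> g = (THE V. V = bellman_opt P \<gamma> g V)"

definition opt_Q ::
  "('s::finite \<Rightarrow> 'a::finite \<Rightarrow> 's \<Rightarrow> real) \<Rightarrow> real \<Rightarrow> ('s \<Rightarrow> 'a \<Rightarrow> real) \<Rightarrow> 's \<Rightarrow> 'a \<Rightarrow> real" where
  "opt_Q P \<gamma> g s a = g s a + \<gamma> * (\<Sum>s'\<in>UNIV. P s a s' * opt_V P \<gamma> g s')"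

definition opt_pol ::
  "('s::finite \<Rightarrow> 'a::finite \<Rightarrow> 's \<Rightarrow> real) \<Rightarrow> real \<Rightarrow> ('s \<Rightarrow> 'a \<Rightarrow> real) \<Rightarrow> 's \<Rightarrow> 'a" where
  "opt_pol P \<gamma> g s = (SOME a. \<forall>b. opt_Q P \<gamma> g s b \<le> opt_Q P \<gamma> g s a)"

definition gap_condition ::
  "('s::finite \<Rightarrow> 'a::finite \<Rightarrow> 's \<Rightarrow> real) \<Rightarrow> real \<Rightarrow> ('s \<Rightarrow> 'a \<Rightarrow> real) \<Rightarrow> real \<Rightarrow> bool" where
  "gap_condition P \<gamma> g \<iota> \<longleftrightarrow>
     (\<forall>s a. a \<noteq> opt_pol P \<gamma> g s \<longrightarrow> opt_V P \<gamma> g s - opt_Q P \<gamma> g s a \<ge> \<iota>)"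

definition lam_grid :: "real \<Rightarrow> nat \<Rightarrow> real set" where
  "lam_grid \<epsilon> N = {real k * \<epsilon> | k. k \<le> N}"

definition perturb_measure :: "real \<Rightarrow> ('s::finite \<times> 'a::finite \<Rightarrow> real) measure" where
  "perturb_measure \<omega> = PiM UNIV (\<lambda>_. uniform_measure lborel {0..\<omega>})"

end

theory Submission
  imports Defs
begin

text \<open>Fix a multiplier \<open>l\<close> and a pair \<open>(s, a)\<close>, and compare the optimal value \<open>U\<close> of the MDP in
  which \<open>a\<close> is forbidden at \<open>s\<close> with the value \<open>W\<close> of the MDP in which \<open>a\<close> is forced at \<open>s\<close>. If
  \<open>a\<close> is not the greedy action at \<open>s\<close> but its gap is below \<open>\<iota>\<close>, then \<open>U = V*\<close> and
  \<open>U(s) - \<iota> / (1 - \<gamma>) \<le> W(s) \<le> U(s)\<close>: a near tie. Now \<open>U\<close> does not depend on the reward of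
  \<open>(s, a)\<close>, whereas \<open>W(s)\<close> grows at least as fast as that reward. Hence, with all other
  coordinates of \<open>\<xi>\<close> fixed, the values of \<open>\<xi>(s, a)\<close> producing a near tie lie in an interval of
  length \<open>\<iota> / (1 - \<gamma>)\<close>, and Fubini bounds the probability of a near tie by \<open>2 \<iota> / ((1 - \<gamma>) \<omega>)\<close>.
  A union bound over \<open>\<Lambda> \<times> S \<times> A\<close> leaves a failure probability \<open>\<delta> / (15 A) \<le> \<delta> / 10\<close>.\<close>

lemma abs_diff_le_sum_abs_diff:
  fixes V W :: "'s::finite \<Rightarrow> real"
  shows "\<bar>V s - W s\<bar> \<le> (\<Sum>s'\<in>UNIV. \<bar>V s' - W s'\<bar>)"
  by (rule member_le_sum) auto

locale discounted_operator =
  fixes T :: "('s::finite \<Rightarrow> real) \<Rightarrow> 's \<Rightarrow> real" and \<gamma> :: real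
  assumes mono: "(\<And>s. V s \<le> W s) \<Longrightarrow> T V s \<le> T W s"
    and add_const: "T (\<lambda>s. V s + k) s = T V s + \<gamma> * k"
    and discount_nonneg: "0 \<le> \<gamma>"
    and discount_less_one: "\<gamma> < 1"
begin

lemma dist_le:
  assumes "\<And>s'. \<bar>V s' - W s'\<bar> \<le> e"
  shows "\<bar>T V s - T W s\<bar> \<le> \<gamma> * e"
proof -
  have "V s' \<le> W s' + e" and "W s' \<le> V s' + e" for s'
    using assms[of s'] by (simp_all add: abs_le_iff)
  then have "T V s \<le> T (\<lambda>s. W s + e) s" and "T W s \<le> T (\<lambda>s. V s + e) s"
    by (simp_all add: mono)
  then show ?thesis
    unfolding add_const by linarith
qed

text \<open>At a state where \<open>Y - X\<close> attains its minimum \<open>m\<close>, the two inequalities give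
  \<open>\<gamma> * m \<le> m\<close>, hence \<open>m \<ge> 0\<close>.\<close>
lemma sub_le_super:
  assumes sub: "\<And>s. X s \<le> T X s" and super: "\<And>s. T Y s \<le> Y s"
  shows "X s \<le> Y s"
proof -
  define m where "m = Min (range (\<lambda>s. Y s - X s))"
  have "m \<in> range (\<lambda>s. Y s - X s)"
    unfolding m_def by (rule Min_in) auto
  then obtain s0 where s0: "m = Y s0 - X s0"
    by auto
  have m_le: "m \<le> Y s - X s" for s
    unfolding m_def by (rule Min_le) auto
  have "X s0 + \<gamma> * m \<le> T X s0 + \<gamma> * m"
    using sub by simp
  also have "\<dots> = T (\<lambda>s. X s + m) s0"
    by (rule add_const[symmetric])
  also have "\<dots> \<le> T Y s0"
    using m_le by (intro mono) (simp add: algebra_simps)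
  also have "\<dots> \<le> Y s0"
    by (rule super)
  finally have "\<gamma> * m \<le> m"
    using s0 by simp
  then have "(1 - \<gamma>) * m \<ge> 0"
    by (simp add: algebra_simps)
  then have "m \<ge> 0"
    using discount_less_one by (simp add: zero_le_mult_iff)
  then show ?thesis
    using m_le[of s] by linarith
qed

lemma fixpoint_unique:
  assumes "\<And>s. T F s = F s" and "\<And>s. T G s = G s"
  shows "F = G"
proof
  fix s
  show "F s = G s"
    using sub_le_super[of F G s] sub_le_super[of G F s] assms by (simp add: antisym)
qed

lemma iterates_dist_le:
  assumes "\<And>s. \<bar>V s - W s\<bar> \<le> D"
  shows "\<bar>(T ^^ n) V s - (T ^^ n) W s\<bar> \<le> \<gamma> ^ n * D"
proof (induction n arbitrary: s)
  case 0
  then show ?case using assms by simp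
next
  case (Suc n)
  then show ?case
    using dist_le[of "(T ^^ n) V" "(T ^^ n) W" "\<gamma> ^ n * D"] by (simp add: mult.assoc)
qed

lemma iterates_convergent: "convergent (\<lambda>n. (T ^^ n) V s)"
proof -
  define D where "D = (\<Sum>s\<in>UNIV. \<bar>T V s - V s\<bar>)"
  have "summable (\<lambda>n. (T ^^ Suc n) V s - (T ^^ n) V s)"
  proof (rule summable_comparison_test)
    have "\<bar>T V s' - V s'\<bar> \<le> D" for s'
      unfolding D_def by (rule abs_diff_le_sum_abs_diff)
    then have "\<bar>(T ^^ n) (T V) s - (T ^^ n) V s\<bar> \<le> \<gamma> ^ n * D" for n
      by (rule iterates_dist_le)
    then show "\<exists>N. \<forall>n\<ge>N. norm ((T ^^ Suc n) V s - (T ^^ n) V s) \<le> \<gamma> ^ n * D"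
      by (simp only: funpow_Suc_right o_apply real_norm_def) blast
    show "summable (\<lambda>n. \<gamma> ^ n * D)"
      using discount_nonneg discount_less_one by (intro summable_mult2 summable_geometric) auto
  qed
  then have "convergent (\<lambda>n. \<Sum>k<n. (T ^^ Suc k) V s - (T ^^ k) V s)"
    by (simp add: summable_iff_convergent)
  moreover have "(\<Sum>k<n. (T ^^ Suc k) V s - (T ^^ k) V s) = (T ^^ n) V s - V s" for n
    using sum_lessThan_telescope[of "\<lambda>k. (T ^^ k) V s" n] by simp
  ultimately have "convergent (\<lambda>n. ((T ^^ n) V s - V s) + V s)"
    by (intro convergent_add convergent_const) simp
  then show ?thesis
    by simp
qed

lemma tendsto_T:
  assumes lim: "\<And>s'. (\<lambda>n. X n s') \<longlonglongrightarrow> L s'"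
  shows "(\<lambda>n. T (X n) s) \<longlonglongrightarrow> T L s"
proof -
  define e where "e n = (\<Sum>s'\<in>UNIV. \<bar>X n s' - L s'\<bar>)" for n
  have "e \<longlonglongrightarrow> (\<Sum>s'\<in>UNIV. \<bar>L s' - L s'\<bar>)"
    unfolding e_def by (intro tendsto_sum tendsto_rabs tendsto_diff lim tendsto_const)
  then have e_lim: "(\<lambda>n. \<gamma> * e n) \<longlonglongrightarrow> 0"
    by (intro tendsto_mult_right_zero) simp
  have bound: "\<forall>n. norm (T (X n) s - T L s) \<le> \<gamma> * e n"
    unfolding real_norm_def e_def by (intro allI dist_le abs_diff_le_sum_abs_diff)
  have "(\<lambda>n. T (X n) s - T L s) \<longlonglongrightarrow> 0"
    by (rule Lim_null_comparison[OF always_eventually[OF bound] e_lim])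
  then show ?thesis
    by (simp add: LIM_zero_iff)
qed

lemma fixpoint_exists: "\<exists>F. \<forall>s. T F s = F s"
proof -
  define F where "F s = lim (\<lambda>n. (T ^^ n) (\<lambda>_. 0) s)" for s
  have F_lim: "(\<lambda>n. (T ^^ n) (\<lambda>_. 0) s) \<longlonglongrightarrow> F s" for s
    unfolding F_def using iterates_convergent by (simp add: convergent_LIMSEQ_iff)
  have "T F s = F s" for s
  proof (rule LIMSEQ_unique)
    show "(\<lambda>n. (T ^^ Suc n) (\<lambda>_. 0) s) \<longlonglongrightarrow> T F s"
      unfolding funpow.simps o_apply by (rule tendsto_T[OF F_lim])
    show "(\<lambda>n. (T ^^ Suc n) (\<lambda>_. 0) s) \<longlonglongrightarrow> F s"
      by (rule LIMSEQ_Suc[OF F_lim])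
  qed
  then show ?thesis
    by blast
qed

definition fixpoint :: "'s \<Rightarrow> real" where
  "fixpoint = (THE V. V = T V)"

lemma fixpoint_eqI:
  assumes "\<And>s. T V s = V s"
  shows "fixpoint = V"
  unfolding fixpoint_def
proof (rule the_equality)
  show "V = T V"
    using assms by auto
  show "W = T W \<Longrightarrow> W = V" for W
    using fixpoint_unique[of W V] assms by metis
qed

lemma T_fixpoint: "T fixpoint s = fixpoint s"
  using fixpoint_exists fixpoint_eqI by metis

lemma iterates_tendsto_fixpoint: "(\<lambda>n. (T ^^ n) V s) \<longlonglongrightarrow> fixpoint s"
proof -
  define D where "D = (\<Sum>s\<in>UNIV. \<bar>V s - fixpoint s\<bar>)"
  have "(T ^^ n) fixpoint = fixpoint" for n
    by (induction n) (auto simp: T_fixpoint)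
  moreover have "\<bar>V s' - fixpoint s'\<bar> \<le> D" for s'
    unfolding D_def by (rule abs_diff_le_sum_abs_diff)
  ultimately have bound: "\<forall>n. norm ((T ^^ n) V s - fixpoint s) \<le> \<gamma> ^ n * D"
    using iterates_dist_le[of V fixpoint D] by simp
  have D_lim: "(\<lambda>n. \<gamma> ^ n * D) \<longlonglongrightarrow> 0"
    using discount_nonneg discount_less_one
    by (intro tendsto_mult_left_zero LIMSEQ_power_zero) auto
  have "(\<lambda>n. (T ^^ n) V s - fixpoint s) \<longlonglongrightarrow> 0"
    by (rule Lim_null_comparison[OF always_eventually[OF bound] D_lim])
  then show ?thesis
    by (simp add: LIM_zero_iff)
qed

end

locale mdp =
  fixes P :: "'s::finite \<Rightarrow> 'a::finite \<Rightarrow> 's \<Rightarrow> real" and \<gamma> :: real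
  assumes stochastic: "stochastic_kernel P"
    and discount_nonneg: "0 \<le> \<gamma>"
    and discount_less_one: "\<gamma> < 1"
begin

definition lookahead :: "('s \<Rightarrow> 'a \<Rightarrow> real) \<Rightarrow> ('s \<Rightarrow> real) \<Rightarrow> 's \<Rightarrow> 'a \<Rightarrow> real" where
  "lookahead g V s b = g s b + \<gamma> * (\<Sum>s'\<in>UNIV. P s b s' * V s')"

definition bellman_restr :: "('s \<Rightarrow> 'a set) \<Rightarrow> ('s \<Rightarrow> 'a \<Rightarrow> real) \<Rightarrow> ('s \<Rightarrow> real) \<Rightarrow> 's \<Rightarrow> real" where
  "bellman_restr A g V s = Max (lookahead g V s ` A s)"

definition value_restr :: "('s \<Rightarrow> 'a set) \<Rightarrow> ('s \<Rightarrow> 'a \<Rightarrow> real) \<Rightarrow> 's \<Rightarrow> real" where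
  "value_restr A g = discounted_operator.fixpoint (bellman_restr A g)"

lemma lookahead_mono:
  assumes "\<And>s'. V s' \<le> W s'"
  shows "lookahead g V s b \<le> lookahead g W s b"
  using stochastic discount_nonneg assms unfolding lookahead_def stochastic_kernel_def
  by (auto intro!: mult_left_mono sum_mono)

lemma lookahead_add_const: "lookahead g (\<lambda>s. V s + k) s b = lookahead g V s b + \<gamma> * k"
proof -
  have "(\<Sum>s'\<in>UNIV. P s b s' * (V s' + k)) = (\<Sum>s'\<in>UNIV. P s b s' * V s') + (\<Sum>s'\<in>UNIV. P s b s') * k"
    by (simp add: distrib_left sum.distrib sum_distrib_right)
  then show ?thesis
    using stochastic unfolding lookahead_def stochastic_kernel_def by (simp add: algebra_simps)
qed

lemma discounted_operator_bellman_restr: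
  assumes "\<And>s. A s \<noteq> {}"
  shows "discounted_operator (bellman_restr A g) \<gamma>"
proof
  fix V W :: "'s \<Rightarrow> real" and s
  assume "\<And>s. V s \<le> W s"
  then have "lookahead g V s b \<le> lookahead g W s b" for b
    by (rule lookahead_mono)
  then show "bellman_restr A g V s \<le> bellman_restr A g W s"
    using assms unfolding bellman_restr_def by (intro Max.boundedI) (auto simp: Max_ge_iff)
next
  fix V :: "'s \<Rightarrow> real" and k s
  have "Max ((\<lambda>x. x + \<gamma> * k) ` lookahead g V s ` A s) = Max (lookahead g V s ` A s) + \<gamma> * k"
    using assms by (intro mono_Max_commute[symmetric]) (auto simp: mono_def)
  then show "bellman_restr A g (\<lambda>s. V s + k) s = bellman_restr A g V s + \<gamma> * k"
    unfolding bellman_restr_def lookahead_add_const by (simp add: image_image)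
qed (use discount_nonneg discount_less_one in auto)

lemma bellman_restr_value_restr:
  assumes "\<And>s. A s \<noteq> {}"
  shows "bellman_restr A g (value_restr A g) s = value_restr A g s"
  unfolding value_restr_def
  by (rule discounted_operator.T_fixpoint[OF discounted_operator_bellman_restr[OF assms]])

lemma value_restr_eqI:
  assumes "\<And>s. A s \<noteq> {}" and "\<And>s. bellman_restr A g V s = V s"
  shows "value_restr A g = V"
  unfolding value_restr_def
  by (rule discounted_operator.fixpoint_eqI[OF discounted_operator_bellman_restr[OF assms(1)] assms(2)])

lemma le_value_restr:
  assumes "\<And>s. A s \<noteq> {}" and "\<And>s. X s \<le> bellman_restr A g X s"
  shows "X s \<le> value_restr A g s"
  using discounted_operator.sub_le_super[OF discounted_operator_bellman_restr[OF assms(1)] assms(2)]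
    bellman_restr_value_restr[OF assms(1)] by simp

lemma bellman_opt_eq: "bellman_opt P \<gamma> g = bellman_restr (\<lambda>_. UNIV) g"
  by (intro ext) (simp add: bellman_opt_def bellman_restr_def lookahead_def)

lemma opt_V_eq: "opt_V P \<gamma> g = value_restr (\<lambda>_. UNIV) g"
proof -
  have "value_restr (\<lambda>_. UNIV) g = bellman_opt P \<gamma> g (value_restr (\<lambda>_. UNIV) g)"
    using bellman_restr_value_restr[of "\<lambda>_. UNIV" g] unfolding bellman_opt_eq by auto
  moreover have "V = bellman_opt P \<gamma> g V \<Longrightarrow> V = value_restr (\<lambda>_. UNIV) g" for V
    using value_restr_eqI[of "\<lambda>_. UNIV" g V] unfolding bellman_opt_eq by auto
  ultimately show ?thesis
    unfolding opt_V_def by (rule the_equality)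
qed

lemma opt_Q_eq: "opt_Q P \<gamma> g s b = lookahead g (opt_V P \<gamma> g) s b"
  unfolding opt_Q_def lookahead_def ..

lemma opt_V_eq_Max: "opt_V P \<gamma> g s = Max (range (opt_Q P \<gamma> g s))"
  using bellman_restr_value_restr[of "\<lambda>_. UNIV" g s]
  unfolding opt_V_eq[symmetric] bellman_restr_def opt_Q_eq by simp

lemma opt_Q_le_opt_V: "opt_Q P \<gamma> g s b \<le> opt_V P \<gamma> g s"
  unfolding opt_V_eq_Max by (rule Max_ge) auto

lemma opt_V_eq_opt_Q_opt_pol: "opt_V P \<gamma> g s = opt_Q P \<gamma> g s (opt_pol P \<gamma> g s)"
proof -
  have "opt_V P \<gamma> g s \<in> range (opt_Q P \<gamma> g s)"
    unfolding opt_V_eq_Max by (rule Max_in) auto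
  then obtain p where p: "opt_Q P \<gamma> g s p = opt_V P \<gamma> g s"
    by auto
  then have "\<forall>b. opt_Q P \<gamma> g s b \<le> opt_Q P \<gamma> g s p"
    using opt_Q_le_opt_V by simp
  then have "\<forall>b. opt_Q P \<gamma> g s b \<le> opt_Q P \<gamma> g s (opt_pol P \<gamma> g s)"
    unfolding opt_pol_def by (rule someI)
  then show ?thesis
    using p opt_Q_le_opt_V by (metis antisym)
qed

text \<open>For a positive margin the gap condition does not depend on which maximiser \<open>opt_pol\<close>
  picks, which makes it measurable in the reward.\<close>
lemma gap_condition_iff:
  assumes "\<iota> > 0"
  shows "gap_condition P \<gamma> g \<iota> \<longleftrightarrow>
    (\<forall>s a b. a \<noteq> b \<longrightarrow> \<iota> \<le> opt_V P \<gamma> g s - opt_Q P \<gamma> g s a \<or> \<iota> \<le> opt_V P \<gamma> g s - opt_Q P \<gamma> g s b)"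
  using assms opt_V_eq_opt_Q_opt_pol[of g] unfolding gap_condition_def by (metis diff_self not_le)

definition forbid_action :: "'s \<Rightarrow> 'a \<Rightarrow> 's \<Rightarrow> 'a set" where
  "forbid_action s a = (\<lambda>_. UNIV)(s := - {a})"

definition force_action :: "'s \<Rightarrow> 'a \<Rightarrow> 's \<Rightarrow> 'a set" where
  "force_action s a = (\<lambda>_. UNIV)(s := {a})"

lemma force_action_nonempty: "force_action s a s' \<noteq> {}"
  unfolding force_action_def by simp

lemma bellman_restr_UNIV_opt_V: "bellman_restr (\<lambda>_. UNIV) g (opt_V P \<gamma> g) s = opt_V P \<gamma> g s"
  unfolding opt_V_eq by (rule bellman_restr_value_restr) simp

lemma value_forbid_action_eq_opt_V:
  assumes "a \<noteq> opt_pol P \<gamma> g s"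
  shows "value_restr (forbid_action s a) g = opt_V P \<gamma> g"
proof (rule value_restr_eqI)
  show "forbid_action s a s' \<noteq> {}" for s'
    using assms unfolding forbid_action_def by auto
  show "bellman_restr (forbid_action s a) g (opt_V P \<gamma> g) s' = opt_V P \<gamma> g s'" for s'
  proof (cases "s' = s")
    case True
    have "opt_pol P \<gamma> g s \<in> - {a}"
      using assms by simp
    then have "Max (opt_Q P \<gamma> g s ` (- {a})) = opt_V P \<gamma> g s"
      using opt_Q_le_opt_V[of g s] opt_V_eq_opt_Q_opt_pol[of g s]
      by (intro antisym Max.boundedI Max_ge_iff[THEN iffD2]) auto
    then show ?thesis
      using True unfolding bellman_restr_def forbid_action_def opt_Q_eq by simp
  next
    case False
    then show ?thesis
      using bellman_restr_UNIV_opt_V unfolding bellman_restr_def forbid_action_def by simp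
  qed
qed

lemma value_force_action_le_opt_V: "value_restr (force_action s a) g s' \<le> opt_V P \<gamma> g s'"
  unfolding opt_V_eq
proof (rule le_value_restr)
  fix s''
  have "value_restr (force_action s a) g s''
      = bellman_restr (force_action s a) g (value_restr (force_action s a) g) s''"
    using bellman_restr_value_restr[OF force_action_nonempty] by simp
  also have "\<dots> \<le> bellman_restr (\<lambda>_. UNIV) g (value_restr (force_action s a) g) s''"
    unfolding bellman_restr_def by (rule Max_mono) (auto simp: force_action_def)
  finally show "value_restr (force_action s a) g s''
      \<le> bellman_restr (\<lambda>_. UNIV) g (value_restr (force_action s a) g) s''" .
qed simp

text \<open>Forcing \<open>a\<close> at \<open>s\<close> costs a one-step loss \<open>V*(s) - Q*(s,a)\<close> on each visit of \<open>s\<close>;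
  summed over all visits it costs at most that loss divided by \<open>1 - \<gamma>\<close>.\<close>
lemma value_force_action_ge:
  "opt_V P \<gamma> g s - (opt_V P \<gamma> g s - opt_Q P \<gamma> g s a) / (1 - \<gamma>) \<le> value_restr (force_action s a) g s"
proof -
  let ?V = "opt_V P \<gamma> g"
  define c where "c = (?V s - opt_Q P \<gamma> g s a) / (1 - \<gamma>)"
  have c_nonneg: "0 \<le> c"
    unfolding c_def using opt_Q_le_opt_V[of g s a] discount_less_one by simp
  have "(1 - \<gamma>) * c = ?V s - opt_Q P \<gamma> g s a"
    unfolding c_def using discount_less_one by simp
  then have c_eq: "c - \<gamma> * c = ?V s - opt_Q P \<gamma> g s a"
    by (simp add: algebra_simps)
  interpret force: discounted_operator "bellman_restr (force_action s a) g" \<gamma>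
    by (rule discounted_operator_bellman_restr[OF force_action_nonempty])
  have "?V s' - c \<le> bellman_restr (force_action s a) g (\<lambda>s''. ?V s'' - c) s'" for s'
  proof -
    have shift: "bellman_restr (force_action s a) g (\<lambda>s''. ?V s'' - c) s'
        = bellman_restr (force_action s a) g ?V s' - \<gamma> * c"
      using force.add_const[of ?V "- c" s'] by simp
    show ?thesis
    proof (cases "s' = s")
      case True
      then show ?thesis
        using shift c_eq unfolding bellman_restr_def force_action_def opt_Q_eq by simp
    next
      case False
      then have "bellman_restr (force_action s a) g ?V s' = ?V s'"
        using bellman_restr_UNIV_opt_V unfolding bellman_restr_def force_action_def by simp
      moreover have "\<gamma> * c \<le> c"
        using c_nonneg discount_less_one by (simp add: mult_left_le_one_le discount_nonneg)
      ultimately show ?thesis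
        using shift by simp
    qed
  qed
  then have "?V s - c \<le> value_restr (force_action s a) g s"
    by (rule le_value_restr[OF force_action_nonempty])
  then show ?thesis
    unfolding c_def .
qed

definition near_tie :: "('s \<Rightarrow> 'a \<Rightarrow> real) \<Rightarrow> 's \<Rightarrow> 'a \<Rightarrow> real \<Rightarrow> bool" where
  "near_tie g s a \<kappa> \<longleftrightarrow>
     value_restr (forbid_action s a) g s - \<kappa> \<le> value_restr (force_action s a) g s \<and>
     value_restr (force_action s a) g s \<le> value_restr (forbid_action s a) g s"

lemma near_tie_if_not_gap_condition:
  assumes "\<not> gap_condition P \<gamma> g \<iota>"
  obtains s a b where "a \<noteq> b" and "near_tie g s a (\<iota> / (1 - \<gamma>))"
proof -
  obtain s a where a: "a \<noteq> opt_pol P \<gamma> g s" and gap: "opt_V P \<gamma> g s - opt_Q P \<gamma> g s a < \<iota>"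
    using assms unfolding gap_condition_def by auto
  have "(opt_V P \<gamma> g s - opt_Q P \<gamma> g s a) / (1 - \<gamma>) \<le> \<iota> / (1 - \<gamma>)"
    using gap discount_less_one by (simp add: divide_right_mono)
  then have "near_tie g s a (\<iota> / (1 - \<gamma>))"
    using value_force_action_ge[of g s a] value_force_action_le_opt_V[of s a g s]
    unfolding near_tie_def value_forbid_action_eq_opt_V[OF a] by linarith
  with a show ?thesis
    using that by blast
qed

lemma value_forbid_action_cong:
  assumes "\<And>s' b. (s', b) \<noteq> (s, a) \<Longrightarrow> g' s' b = g s' b"
  shows "value_restr (forbid_action s a) g' = value_restr (forbid_action s a) g"
proof -
  have "lookahead g' V s' b = lookahead g V s' b" if "b \<in> forbid_action s a s'" for V s' b
    using that assms[of s' b] unfolding lookahead_def forbid_action_def by (cases "s' = s") auto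
  then have "bellman_restr (forbid_action s a) g' = bellman_restr (forbid_action s a) g"
    unfolding bellman_restr_def by (intro ext) (metis (no_types, lifting) image_cong)
  then show ?thesis
    unfolding value_restr_def by simp
qed

lemma value_force_action_increase:
  assumes incr: "g' s a = g s a + d" and "0 \<le> d"
    and same: "\<And>s' b. (s', b) \<noteq> (s, a) \<Longrightarrow> g' s' b = g s' b"
  shows "value_restr (force_action s a) g s + d \<le> value_restr (force_action s a) g' s"
proof -
  let ?W = "value_restr (force_action s a) g"
  define X where "X = ?W(s := ?W s + d)"
  have W_fix: "bellman_restr (force_action s a) g ?W s' = ?W s'" for s'
    by (rule bellman_restr_value_restr[OF force_action_nonempty])
  have "X s' \<le> bellman_restr (force_action s a) g' X s'" for s'
  proof -
    interpret force': discounted_operator "bellman_restr (force_action s a) g'" \<gamma>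
      by (rule discounted_operator_bellman_restr[OF force_action_nonempty])
    have "bellman_restr (force_action s a) g' ?W s' \<le> bellman_restr (force_action s a) g' X s'"
      using \<open>0 \<le> d\<close> unfolding X_def by (intro force'.mono) simp
    moreover have "bellman_restr (force_action s a) g' ?W s' = X s'"
    proof (cases "s' = s")
      case True
      then show ?thesis
        using W_fix[of s] incr unfolding X_def bellman_restr_def force_action_def lookahead_def
        by simp
    next
      case False
      then show ?thesis
        using W_fix[of s'] same unfolding X_def bellman_restr_def force_action_def lookahead_def
        by simp
    qed
    ultimately show ?thesis
      by simp
  qed
  then have "X s \<le> value_restr (force_action s a) g' s"
    by (rule le_value_restr[OF force_action_nonempty])
  then show ?thesis
    unfolding X_def by simp
qed

text \<open>Raising the reward of \<open>(s, a)\<close> by \<open>d\<close> leaves the value with \<open>a\<close> forbidden unchanged and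
  raises the value with \<open>a\<close> forced by at least \<open>d\<close>.\<close>
lemma near_tie_reward_diff_le:
  assumes "near_tie g s a \<kappa>" and "near_tie g' s a \<kappa>"
    and "g' s a = g s a + d" and "0 \<le> d"
    and "\<And>s' b. (s', b) \<noteq> (s, a) \<Longrightarrow> g' s' b = g s' b"
  shows "d \<le> \<kappa>"
  using assms value_forbid_action_cong[of s a g' g] value_force_action_increase[of g' s a g d]
  unfolding near_tie_def by fastforce

lemma measurable_value_restr:
  assumes nonempty: "\<And>s. A s \<noteq> {}"
    and G: "\<And>s b. (\<lambda>x. G x s b) \<in> borel_measurable M"
  shows "(\<lambda>x. value_restr A (G x) s) \<in> borel_measurable M"
proof (rule borel_measurable_LIMSEQ_real)
  define it where "it n x = (bellman_restr A (G x) ^^ n) (\<lambda>_. 0)" for n x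
  show "(\<lambda>n. it n x s) \<longlonglongrightarrow> value_restr A (G x) s" for x
    unfolding it_def value_restr_def
    by (rule discounted_operator.iterates_tendsto_fixpoint[OF discounted_operator_bellman_restr[OF nonempty]])
  show "(\<lambda>x. it n x s) \<in> borel_measurable M" for n
  proof (induction n arbitrary: s)
    case 0
    then show ?case
      unfolding it_def by simp
  next
    case (Suc n)
    have "(\<lambda>x. lookahead (G x) (it n x) s b) \<in> borel_measurable M" for b
      unfolding lookahead_def using Suc G by measurable
    then have "(\<lambda>x. Max ((\<lambda>b. lookahead (G x) (it n x) s b) ` A s)) \<in> borel_measurable M"
      by (intro borel_measurable_Max) simp_all
    then show ?case
      unfolding it_def bellman_restr_def by simp
  qed
qed

lemma measurable_gap_condition:
  assumes "0 < \<iota>" and G: "\<And>s b. (\<lambda>x. G x s b) \<in> borel_measurable M"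
  shows "{x \<in> space M. gap_condition P \<gamma> (G x) \<iota>} \<in> sets M"
proof -
  have [measurable]: "(\<lambda>x. opt_V P \<gamma> (G x) s) \<in> borel_measurable M" for s
    unfolding opt_V_eq by (rule measurable_value_restr[OF _ G]) simp
  have [measurable]: "(\<lambda>x. opt_Q P \<gamma> (G x) s b) \<in> borel_measurable M" for s b
    unfolding opt_Q_eq lookahead_def using G by measurable
  show ?thesis
    unfolding gap_condition_iff[OF \<open>0 < \<iota>\<close>] by measurable
qed

end

lemma (in prob_space) prob_ge_one_minus_card_union:
  assumes "finite I" and "\<And>j. j \<in> I \<Longrightarrow> E j \<in> events \<and> prob (E j) \<le> p"
    and "G \<in> events" and "space M - (\<Union>j\<in>I. E j) \<subseteq> G"
  shows "1 - real (card I) * p \<le> prob G"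
proof -
  have "prob (\<Union>j\<in>I. E j) \<le> (\<Sum>j\<in>I. prob (E j))"
    using assms(2) by (intro measure_UNION_le[OF \<open>finite I\<close>]) auto
  also have "\<dots> \<le> real (card I) * p"
    using assms(2) sum_mono[of I "\<lambda>j. prob (E j)" "\<lambda>_. p"] by simp
  finally have "1 - real (card I) * p \<le> prob (space M - (\<Union>j\<in>I. E j))"
    using assms(1,2) by (subst prob_compl) auto
  also have "\<dots> \<le> prob G"
    using assms(4,3) by (rule finite_measure_mono)
  finally show ?thesis .
qed

lemma prob_space_perturb_measure: "0 < \<omega> \<Longrightarrow> prob_space (perturb_measure \<omega>)"
  unfolding perturb_measure_def by (intro prob_space_PiM prob_space_uniform_measure) auto

lemma measurable_perturb_coord: "(\<lambda>\<xi>. \<xi> i) \<in> borel_measurable (perturb_measure \<omega>)"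
proof -
  have "(\<lambda>\<xi>. \<xi> i) \<in> measurable (perturb_measure \<omega>) (uniform_measure lborel {0..\<omega>})"
    unfolding perturb_measure_def by (rule measurable_component_singleton) simp
  moreover have "(\<lambda>x. x) \<in> measurable (uniform_measure lborel {0..\<omega>}) borel"
    by (rule measurable_ident_sets) simp
  ultimately show ?thesis
    by (rule measurable_compose)
qed

text \<open>Each section of \<open>E\<close> along the \<open>i\<close>-th coordinate lies in an interval of length \<open>2 \<kappa>\<close>
  around any of its points; integrate over the remaining coordinates.\<close>
lemma emeasure_PiM_uniform_le_of_sections:
  fixes E :: "('i::finite \<Rightarrow> real) set" and i :: 'i
    and \<omega> \<kappa> :: real
  defines "M \<equiv> PiM UNIV (\<lambda>_. uniform_measure lborel {0..\<omega>})"
  assumes "0 < \<omega>" and "0 \<le> \<kappa>" and E: "E \<in> sets M"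
    and sections: "\<And>x y y'. x(i := y) \<in> E \<Longrightarrow> x(i := y') \<in> E \<Longrightarrow> y \<le> y' \<Longrightarrow> y' - y \<le> \<kappa>"
  shows "emeasure M E \<le> ennreal (2 * \<kappa> / \<omega>)"
proof -
  let ?U = "uniform_measure lborel {0..\<omega>}"
  have U_prob: "prob_space ?U"
    using \<open>0 < \<omega>\<close> by (intro prob_space_uniform_measure) auto
  interpret product_prob_space "\<lambda>_. ?U"
    by (intro product_prob_spaceI U_prob)
  have UNIV_eq: "(UNIV :: 'i set) = insert i (UNIV - {i})"
    by auto
  have section_le: "(\<integral>\<^sup>+ y. indicator E (x(i := y)) \<partial>?U) \<le> ennreal (2 * \<kappa> / \<omega>)" for x
  proof (cases "\<exists>y0. x(i := y0) \<in> E")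
    case False
    then show ?thesis
      by (simp add: indicator_def)
  next
    case True
    then obtain y0 where y0: "x(i := y0) \<in> E" ..
    have "indicator E (x(i := y)) \<le> (indicator {y0 - \<kappa> .. y0 + \<kappa>} y :: ennreal)" for y
      using sections[OF y0, of y] sections[OF _ y0, of y]
      by (cases "y0 \<le> y") (auto simp: indicator_def)
    then have "(\<integral>\<^sup>+ y. indicator E (x(i := y)) \<partial>?U) \<le> (\<integral>\<^sup>+ y. indicator {y0 - \<kappa> .. y0 + \<kappa>} y \<partial>?U)"
      by (intro nn_integral_mono)
    also have "\<dots> = emeasure ?U {y0 - \<kappa> .. y0 + \<kappa>}"
      by (simp add: nn_integral_indicator)
    also have "\<dots> = emeasure lborel ({0..\<omega>} \<inter> {y0 - \<kappa> .. y0 + \<kappa>}) / emeasure lborel {0..\<omega>}"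
      by simp
    also have "\<dots> \<le> emeasure lborel {y0 - \<kappa> .. y0 + \<kappa>} / emeasure lborel {0..\<omega>}"
      by (intro divide_right_mono_ennreal emeasure_mono) auto
    also have "\<dots> = ennreal (2 * \<kappa> / \<omega>)"
      using \<open>0 \<le> \<kappa>\<close> \<open>0 < \<omega>\<close> by (simp add: divide_ennreal)
    finally show ?thesis .
  qed
  have "emeasure M E = (\<integral>\<^sup>+ \<xi>. indicator E \<xi> \<partial>PiM (insert i (UNIV - {i})) (\<lambda>_. ?U))"
    using E UNIV_eq unfolding M_def by (simp add: nn_integral_indicator)
  also have "\<dots> = (\<integral>\<^sup>+ x. (\<integral>\<^sup>+ y. indicator E (x(i := y)) \<partial>?U) \<partial>PiM (UNIV - {i}) (\<lambda>_. ?U))"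
    using E UNIV_eq unfolding M_def by (intro product_nn_integral_insert) auto
  also have "\<dots> \<le> (\<integral>\<^sup>+ x. ennreal (2 * \<kappa> / \<omega>) \<partial>PiM (UNIV - {i}) (\<lambda>_. ?U))"
    by (intro nn_integral_mono section_le)
  also have "\<dots> = ennreal (2 * \<kappa> / \<omega>)"
  proof -
    interpret rest: prob_space "PiM (UNIV - {i}) (\<lambda>_. ?U)"
      by (rule prob_space_PiM[OF U_prob])
    show ?thesis
      by (simp add: rest.emeasure_space_1)
  qed
  finally show ?thesis .
qed

context mdp
begin

lemma prob_near_tie_le:
  fixes R :: "'s \<Rightarrow> 'a \<Rightarrow> real" and s :: 's and a b :: 'a and \<omega> \<kappa> :: real
  assumes "0 < \<omega>" and "0 \<le> \<kappa>" and "a \<noteq> b"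
  defines "E \<equiv> {\<xi> \<in> space (perturb_measure \<omega>). near_tie (\<lambda>s' b'. R s' b' + \<xi> (s', b')) s a \<kappa>}"
  shows "E \<in> sets (perturb_measure \<omega>)" and "measure (perturb_measure \<omega>) E \<le> 2 * \<kappa> / \<omega>"
proof -
  let ?M = "perturb_measure \<omega> :: ('s \<times> 'a \<Rightarrow> real) measure"
  interpret prob_space ?M
    by (rule prob_space_perturb_measure[OF \<open>0 < \<omega>\<close>])
  have reward: "(\<lambda>\<xi>. R s' b' + \<xi> (s', b')) \<in> borel_measurable ?M" for s' b'
    using measurable_perturb_coord by measurable
  have "forbid_action s a s' \<noteq> {}" for s'
    using \<open>a \<noteq> b\<close> unfolding forbid_action_def by auto
  have forbid:
      "(\<lambda>\<xi>. value_restr (forbid_action s a) (\<lambda>s' b'. R s' b' + \<xi> (s', b')) s) \<in> borel_measurable ?M"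
    by (rule measurable_value_restr[OF \<open>\<And>s'. forbid_action s a s' \<noteq> {}\<close> reward])
  have force:
      "(\<lambda>\<xi>. value_restr (force_action s a) (\<lambda>s' b'. R s' b' + \<xi> (s', b')) s) \<in> borel_measurable ?M"
    by (rule measurable_value_restr[OF force_action_nonempty reward])
  show E: "E \<in> sets ?M"
    unfolding E_def near_tie_def
    by (intro sets.sets_Collect_conj borel_measurable_le borel_measurable_diff forbid force) simp
  have "y' - y \<le> \<kappa>" if "x((s, a) := y) \<in> E" "x((s, a) := y') \<in> E" "y \<le> y'" for x y y'
    using that by (intro near_tie_reward_diff_le[where g = "\<lambda>s' b'. R s' b' + (x((s, a) := y)) (s', b')"
        and g' = "\<lambda>s' b'. R s' b' + (x((s, a) := y')) (s', b')" and d = "y' - y"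
        and s = s and a = a and \<kappa> = \<kappa>]) (auto simp: E_def)
  then have "emeasure ?M E \<le> ennreal (2 * \<kappa> / \<omega>)"
    using E \<open>0 < \<omega>\<close> \<open>0 \<le> \<kappa>\<close> unfolding perturb_measure_def
    by (intro emeasure_PiM_uniform_le_of_sections) auto
  then show "measure ?M E \<le> 2 * \<kappa> / \<omega>"
    using \<open>0 < \<omega>\<close> \<open>0 \<le> \<kappa>\<close> by (simp add: emeasure_eq_measure ennreal_le_iff)
qed

lemma prob_gap_condition_ge:
  fixes R :: "'l \<Rightarrow> 's \<Rightarrow> 'a \<Rightarrow> real" and \<omega> \<iota> :: real
  assumes "finite L" and "0 < \<omega>" and "0 < \<iota>"
  shows "1 - real (card L * CARD('s) * CARD('a)) * (2 * \<iota> / ((1 - \<gamma>) * \<omega>))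
    \<le> measure (perturb_measure \<omega>)
         {\<xi> \<in> space (perturb_measure \<omega>). \<forall>l\<in>L. gap_condition P \<gamma> (\<lambda>s a. R l s a + \<xi> (s, a)) \<iota>}"
    (is "_ \<le> measure ?M ?G")
proof -
  interpret prob_space ?M
    by (rule prob_space_perturb_measure[OF \<open>0 < \<omega>\<close>])
  define \<kappa> where "\<kappa> = \<iota> / (1 - \<gamma>)"
  have "0 \<le> \<kappa>"
    unfolding \<kappa>_def using \<open>0 < \<iota>\<close> discount_less_one by simp
  define I where "I = L \<times> (UNIV :: 's set) \<times> {a :: 'a. \<exists>b. a \<noteq> b}"
  define E where "E = (\<lambda>(l, s, a). {\<xi> \<in> space ?M. near_tie (\<lambda>s' b'. R l s' b' + \<xi> (s', b')) s a \<kappa>})"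
  have "space ?M - (\<Union>j\<in>I. E j) \<subseteq> ?G"
  proof clarify
    fix \<xi> l assume \<xi>: "\<xi> \<in> space ?M" "\<xi> \<notin> (\<Union>j\<in>I. E j)" and "l \<in> L"
    show "gap_condition P \<gamma> (\<lambda>s a. R l s a + \<xi> (s, a)) \<iota>"
    proof (rule ccontr)
      assume "\<not> ?thesis"
      then obtain s a b where "a \<noteq> b" "near_tie (\<lambda>s a. R l s a + \<xi> (s, a)) s a \<kappa>"
        unfolding \<kappa>_def by (rule near_tie_if_not_gap_condition)
      then show False
        using \<xi> \<open>l \<in> L\<close> unfolding E_def I_def by blast
    qed
  qed
  moreover have "?G \<in> events"
    using \<open>0 < \<iota>\<close> measurable_perturb_coord
    by (intro sets.sets_Collect_finite_All measurable_gap_condition \<open>finite L\<close>) measurable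
  moreover have "finite I"
    unfolding I_def using \<open>finite L\<close> by simp
  ultimately have prob_ge: "1 - real (card I) * (2 * \<kappa> / \<omega>) \<le> prob ?G"
    using prob_near_tie_le[OF \<open>0 < \<omega>\<close> \<open>0 \<le> \<kappa>\<close>]
    by (intro prob_ge_one_minus_card_union) (auto simp: I_def E_def)
  have "card I \<le> card L * CARD('s) * CARD('a)"
    unfolding I_def card_cartesian_product by (simp add: card_mono)
  then have "real (card I) * (2 * \<kappa> / \<omega>) \<le> real (card L * CARD('s) * CARD('a)) * (2 * \<kappa> / \<omega>)"
    using \<open>0 \<le> \<kappa>\<close> \<open>0 < \<omega>\<close> by (intro mult_right_mono of_nat_mono) simp_all
  also have "\<dots> = real (card L * CARD('s) * CARD('a)) * (2 * \<iota> / ((1 - \<gamma>) * \<omega>))"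
    unfolding \<kappa>_def by simp
  finally show ?thesis
    using prob_ge by linarith
qed

end

lemma lam_grid_eq_image: "lam_grid \<epsilon> N = (\<lambda>k. real k * \<epsilon>) ` {..N}"
  unfolding lam_grid_def by auto

theorem mainTheorem12:
  fixes P :: "'s::finite \<Rightarrow> 'a::finite \<Rightarrow> 's \<Rightarrow> real"
    and r c :: "'s \<Rightarrow> 'a \<Rightarrow> real"
    and \<gamma> \<omega> \<delta> \<epsilon> :: real and N :: nat
  assumes "stochastic_kernel P"
    and "0 \<le> \<gamma>" and "\<gamma> < 1"
    and "0 < \<omega>"
    and "0 < \<delta>" and "\<delta> < 1"
    and "0 < \<epsilon>"
  shows "measure (perturb_measure \<omega>)
           {\<xi> \<in> space (perturb_measure \<omega>).
              \<forall>l\<in>lam_grid \<epsilon> N.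
                gap_condition P \<gamma> (\<lambda>s a. r s a + \<xi> (s, a) + l * c s a)
                  (\<omega> * \<delta> * (1 - \<gamma>) /
                   (30 * real (card (lam_grid \<epsilon> N)) * real CARD('s) * real CARD('a) ^ 2))}
         \<ge> 1 - \<delta> / 10"
proof -
  interpret mdp P \<gamma>
    using assms by unfold_locales auto
  define L where "L = lam_grid \<epsilon> N"
  define \<iota> where "\<iota> = \<omega> * \<delta> * (1 - \<gamma>) / (30 * real (card L) * real CARD('s) * real CARD('a) ^ 2)"
  have "finite L" and "0 < card L"
    unfolding L_def lam_grid_eq_image by (auto simp: card_gt_0_iff)
  then have "0 < \<iota>"
    unfolding \<iota>_def using assms by simp
  have "1 \<le> real CARD('a)"
    by (simp add: Suc_le_eq)
  have "real (card L * CARD('s) * CARD('a)) * (2 * \<iota> / ((1 - \<gamma>) * \<omega>)) = \<delta> / (15 * CARD('a))"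
    unfolding \<iota>_def using \<open>0 < card L\<close> assms by (simp add: field_simps power2_eq_square)
  also have "\<dots> \<le> \<delta> / 10"
    using \<open>0 < \<delta>\<close> \<open>1 \<le> real CARD('a)\<close> by (intro divide_left_mono) linarith+
  finally have "1 - \<delta> / 10 \<le> 1 - real (card L * CARD('s) * CARD('a)) * (2 * \<iota> / ((1 - \<gamma>) * \<omega>))"
    by simp
  also have "\<dots> \<le> measure (perturb_measure \<omega>) {\<xi> \<in> space (perturb_measure \<omega>).
      \<forall>l\<in>L. gap_condition P \<gamma> (\<lambda>s a. (r s a + l * c s a) + \<xi> (s, a)) \<iota>}"
    using prob_gap_condition_ge[where R = "\<lambda>l s a. r s a + l * c s a", OF \<open>finite L\<close> \<open>0 < \<omega>\<close> \<open>0 < \<iota>\<close>]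
    by simp
  finally show ?thesis
    unfolding L_def \<iota>_def by (simp add: ac_simps)
qed

end
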